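(* Let $V$ be a set with $\#V=\aleph_0$, let $k:V\times V\to\mathbb{C}$ be a positive definite function, and let $\mathscr{H}=\mathscr{H}(k)$ be the corresponding reproducing kernel Hilbert space. Assume $\delta_x\in\mathscr{H}$ for all $x\in V$. Then there are closable operators $T:\mathscr{H}\to\ell^2(V)$ with domain $\mathrm{span}\{k_x:x\in V\}$ and $S:\ell^2(V)\to\mathscr{H}$ with domain $\mathrm{span}\{\delta_x:x\in V\}$ such that $T\subseteq S^*$, $S\subseteq T^*$, and $$Tk_x=\delta_x,\qquad S\delta_x=\delta_x\qquad\text{for all }x\in V.$$
   Context: $\delta_x(y)=1$ if $y=x$ and $0$ otherwise. A function $k:V\times V\to\mathbb{C}$ is positive definite if $\sum_{x\in F}\sum_{y\in F}k(x,y)\overline{c_x}c_y\ge 0$ for every finite $F\subset V$ and all $\{c_x\}\subset\mathbb{C}$. For $x\in V$ let $k_x:=k(\cdot,x)$. The RKHS $\mathscr{H}(k)$ is the Hilbert completion of $\mathrm{span}\{k_x\}$ with respect to $\langle\sum_x c_xk_x,\sum_y d_yk_y\rangle_{\mathscr{H}}=\sum\sum\overline{c_x}d_yk(x,y)$ (modulo null vectors); it is a Hilbert space of functions on $V$ with $\langle k_x,\varphi\rangle_{\mathscr{H}}=\varphi(x)$ for all $x\in V$, $\varphi\in\mathscr{H}$. *)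

theory Defs
  imports "HOL-Analysis.Analysis"
begin

text \<open>Functions on V are modelled as elements of type 'v => complex, where the
countably infinite set V is the type 'v.\<close>

definition pos_def_kernel :: "('v \<Rightarrow> 'v \<Rightarrow> complex) \<Rightarrow> bool" where
  "pos_def_kernel k \<longleftrightarrow>
     (\<forall>F (c :: 'v \<Rightarrow> complex). finite F \<longrightarrow>
        (let s = (\<Sum>x\<in>F. \<Sum>y\<in>F. k x y * cnj (c x) * c y) in Im s = 0 \<and> Re s \<ge> 0))"

definition kfun :: "('v \<Rightarrow> 'v \<Rightarrow> complex) \<Rightarrow> 'v \<Rightarrow> ('v \<Rightarrow> complex)" where
  "kfun k x = (\<lambda>y. k y x)"

definition delta :: "'v \<Rightarrow> ('v \<Rightarrow> complex)" where
  "delta x = (\<lambda>y. if y = x then 1 else 0)"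

definition kspan :: "('v \<Rightarrow> 'v \<Rightarrow> complex) \<Rightarrow> ('v \<Rightarrow> complex) set" where
  "kspan k = {f. \<exists>F c. finite F \<and> f = (\<lambda>z. \<Sum>x\<in>F. c x * kfun k x z)}"

definition dspan :: "('v \<Rightarrow> complex) set" where
  "dspan = {f. \<exists>F c. finite F \<and> f = (\<lambda>z. \<Sum>x\<in>F. c x * delta x z)}"

definition pre_ip :: "('v \<Rightarrow> 'v \<Rightarrow> complex) \<Rightarrow> ('v \<Rightarrow> complex) \<Rightarrow> ('v \<Rightarrow> complex) \<Rightarrow> complex" where
  "pre_ip k f g =
     (let (F, c) = (SOME (F, c). finite F \<and> f = (\<lambda>z. \<Sum>x\<in>F. c x * kfun k x z))
      in \<Sum>x\<in>F. cnj (c x) * g x)"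

definition approx_seq :: "('v \<Rightarrow> 'v \<Rightarrow> complex) \<Rightarrow> ('v \<Rightarrow> complex) \<Rightarrow> (nat \<Rightarrow> 'v \<Rightarrow> complex) \<Rightarrow> bool" where
  "approx_seq k \<phi> fs \<longleftrightarrow>
     (\<forall>n. fs n \<in> kspan k) \<and>
     (\<forall>e>0. \<exists>N. \<forall>m\<ge>N. \<forall>n\<ge>N. Re (pre_ip k (fs m - fs n) (fs m - fs n)) < e) \<and>
     (\<forall>x. (\<lambda>n. fs n x) \<longlonglongrightarrow> \<phi> x)"

text \<open>The RKHS H(k), realised as a space of functions on V (Hilbert completion of span{k_x}).\<close>
definition rkhs :: "('v \<Rightarrow> 'v \<Rightarrow> complex) \<Rightarrow> ('v \<Rightarrow> complex) set" where
  "rkhs k = {\<phi>. \<exists>fs. approx_seq k \<phi> fs}"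

definition rkhs_ip :: "('v \<Rightarrow> 'v \<Rightarrow> complex) \<Rightarrow> ('v \<Rightarrow> complex) \<Rightarrow> ('v \<Rightarrow> complex) \<Rightarrow> complex" where
  "rkhs_ip k \<phi> \<psi> =
     lim (\<lambda>n. pre_ip k ((SOME fs. approx_seq k \<phi> fs) n) ((SOME gs. approx_seq k \<psi> gs) n))"

definition l2 :: "('v \<Rightarrow> complex) set" where
  "l2 = {f. (\<lambda>x. (cmod (f x))\<^sup>2) summable_on UNIV}"

definition l2_ip :: "('v \<Rightarrow> complex) \<Rightarrow> ('v \<Rightarrow> complex) \<Rightarrow> complex" where
  "l2_ip f g = (\<Sum>\<^sub>\<infinity>x. cnj (f x) * g x)"

definition ipnorm :: "(('v \<Rightarrow> complex) \<Rightarrow> ('v \<Rightarrow> complex) \<Rightarrow> complex) \<Rightarrow> ('v \<Rightarrow> complex) \<Rightarrow> real" where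
  "ipnorm ip u = sqrt (Re (ip u u))"

definition lin_op :: "('v \<Rightarrow> complex) set \<Rightarrow> ('v \<Rightarrow> complex) set \<Rightarrow>
     (('v \<Rightarrow> complex) \<Rightarrow> ('v \<Rightarrow> complex)) \<Rightarrow> bool" where
  "lin_op D B T \<longleftrightarrow> (\<forall>u\<in>D. T u \<in> B) \<and>
     (\<forall>u\<in>D. \<forall>v\<in>D. \<forall>a b :: complex.
        T (\<lambda>z. a * u z + b * v z) = (\<lambda>z. a * T u z + b * T v z))"

definition graph_closure ::
  "('v \<Rightarrow> complex) set \<Rightarrow> (('v \<Rightarrow> complex) \<Rightarrow> ('v \<Rightarrow> complex) \<Rightarrow> complex) \<Rightarrow>
   ('v \<Rightarrow> complex) set \<Rightarrow> (('v \<Rightarrow> complex) \<Rightarrow> ('v \<Rightarrow> complex) \<Rightarrow> complex) \<Rightarrow>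
   ('v \<Rightarrow> complex) set \<Rightarrow> (('v \<Rightarrow> complex) \<Rightarrow> ('v \<Rightarrow> complex)) \<Rightarrow>
   (('v \<Rightarrow> complex) \<times> ('v \<Rightarrow> complex)) set" where
  "graph_closure A ipA B ipB D T =
     {(u, w). u \<in> A \<and> w \<in> B \<and>
        (\<exists>us. (\<forall>n. us n \<in> D) \<and> (\<lambda>n. ipnorm ipA (us n - u)) \<longlonglongrightarrow> 0 \<and>
              (\<lambda>n. ipnorm ipB (T (us n) - w)) \<longlonglongrightarrow> 0)}"

definition closable ::
  "('v \<Rightarrow> complex) set \<Rightarrow> (('v \<Rightarrow> complex) \<Rightarrow> ('v \<Rightarrow> complex) \<Rightarrow> complex) \<Rightarrow>
   ('v \<Rightarrow> complex) set \<Rightarrow> (('v \<Rightarrow> complex) \<Rightarrow> ('v \<Rightarrow> complex) \<Rightarrow> complex) \<Rightarrow>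
   ('v \<Rightarrow> complex) set \<Rightarrow> (('v \<Rightarrow> complex) \<Rightarrow> ('v \<Rightarrow> complex)) \<Rightarrow> bool" where
  "closable A ipA B ipB D T \<longleftrightarrow>
     (\<forall>u w1 w2. (u, w1) \<in> graph_closure A ipA B ipB D T \<longrightarrow>
                (u, w2) \<in> graph_closure A ipA B ipB D T \<longrightarrow> w1 = w2)"

definition adjoint_graph ::
  "('v \<Rightarrow> complex) set \<Rightarrow> (('v \<Rightarrow> complex) \<Rightarrow> ('v \<Rightarrow> complex) \<Rightarrow> complex) \<Rightarrow>
   ('v \<Rightarrow> complex) set \<Rightarrow> (('v \<Rightarrow> complex) \<Rightarrow> ('v \<Rightarrow> complex) \<Rightarrow> complex) \<Rightarrow>
   ('v \<Rightarrow> complex) set \<Rightarrow> (('v \<Rightarrow> complex) \<Rightarrow> ('v \<Rightarrow> complex)) \<Rightarrow>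
   (('v \<Rightarrow> complex) \<times> ('v \<Rightarrow> complex)) set" where
  "adjoint_graph A ipA B ipB D T =
     {(u, w). u \<in> B \<and> w \<in> A \<and> (\<forall>v\<in>D. ipB (T v) u = ipA v w)}"

definition graph :: "('v \<Rightarrow> complex) set \<Rightarrow> (('v \<Rightarrow> complex) \<Rightarrow> ('v \<Rightarrow> complex)) \<Rightarrow>
   (('v \<Rightarrow> complex) \<times> ('v \<Rightarrow> complex)) set" where
  "graph D T = {(u, T u) | u. u \<in> D}"

end

theory Submission
  imports Defs
begin

text \<open>
  The pre-inner product on \<open>span{k_x}\<close> is a positive semidefinite Hermitian form, so it satisfies
  Cauchy--Schwarz, and a Cauchy sequence in the span that tends to \<open>0\<close> pointwise tends to \<open>0\<close> in
  norm. Hence the inner product of \<open>H\<close> is the limit of the pre-inner products along any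
  approximating sequences, which gives the reproducing identity
  \<open>\<langle>\<Sum> c\<^sub>x k\<^sub>x, \<psi>\<rangle> = \<Sum> conj(c\<^sub>x) \<psi>(x)\<close>.
  Put \<open>(T u)(y) := \<langle>\<delta>\<^sub>y, u\<rangle>\<close>: by the reproducing identity \<open>T(\<Sum> c\<^sub>x k\<^sub>x) = \<Sum> c\<^sub>x \<delta>\<^sub>x\<close>, and \<open>S\<close> is
  the inclusion of the finitely supported functions. Both adjoint relations are again the
  reproducing identity. Closability of both operators holds because each coordinate is
  continuous for all the norms involved: \<open>|(T u)(y)| \<le> \<parallel>\<delta>\<^sub>y\<parallel> \<parallel>u\<parallel>\<close>, \<open>|\<phi>(y)| \<le> \<parallel>k\<^sub>y\<parallel> \<parallel>\<phi>\<parallel>\<close> on \<open>H\<close> and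
  \<open>|\<phi>(y)| \<le> \<parallel>\<phi>\<parallel>\<close> on \<open>l2\<close>.
\<close>

section \<open>Closability and the space \<open>l2\<close>\<close>

text \<open>If point evaluations are controlled by both norms, a limit in the closure of the graph is
  determined pointwise by its first component.\<close>

lemma closableI_pointwise:
  assumes eval_B: "\<And>y. \<exists>C. \<forall>u\<in>D. \<forall>w\<in>B. cmod (T u y - w y) \<le> C * ipnorm ipB (T u - w)"
    and eval_A: "\<And>y. \<exists>C. \<forall>u\<in>D. \<forall>v\<in>D. \<forall>a\<in>A.
                   cmod (T u y - T v y) \<le> C * (ipnorm ipA (u - a) + ipnorm ipA (v - a))"
  shows "closable A ipA B ipB D T"
  unfolding closable_def
proof (intro allI impI)
  fix a w1 w2
  assume "(a, w1) \<in> graph_closure A ipA B ipB D T" "(a, w2) \<in> graph_closure A ipA B ipB D T"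
  then obtain us vs where "a \<in> A" "w1 \<in> B" "w2 \<in> B"
    and us: "\<forall>n. us n \<in> D" "(\<lambda>n. ipnorm ipA (us n - a)) \<longlonglongrightarrow> 0" "(\<lambda>n. ipnorm ipB (T (us n) - w1)) \<longlonglongrightarrow> 0"
    and vs: "\<forall>n. vs n \<in> D" "(\<lambda>n. ipnorm ipA (vs n - a)) \<longlonglongrightarrow> 0" "(\<lambda>n. ipnorm ipB (T (vs n) - w2)) \<longlonglongrightarrow> 0"
    unfolding graph_closure_def by auto
  show "w1 = w2"
  proof
    fix y
    obtain C1 where C1: "\<forall>u\<in>D. \<forall>w\<in>B. cmod (T u y - w y) \<le> C1 * ipnorm ipB (T u - w)"
      using eval_B by blast
    obtain C2 where C2: "\<forall>u\<in>D. \<forall>v\<in>D. cmod (T u y - T v y) \<le> C2 * (ipnorm ipA (u - a) + ipnorm ipA (v - a))"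
      using eval_A \<open>a \<in> A\<close> by blast
    have "(\<lambda>n. T (us n) y - w1 y) \<longlonglongrightarrow> 0"
      using C1 us \<open>w1 \<in> B\<close>
      by (intro Lim_null_comparison[OF _ tendsto_mult_right_zero[OF us(3)]] always_eventually) auto
    moreover have "(\<lambda>n. T (vs n) y - w2 y) \<longlonglongrightarrow> 0"
      using C1 vs \<open>w2 \<in> B\<close>
      by (intro Lim_null_comparison[OF _ tendsto_mult_right_zero[OF vs(3)]] always_eventually) auto
    moreover have "(\<lambda>n. T (us n) y - T (vs n) y) \<longlonglongrightarrow> 0"
      using C2 us vs
      by (intro Lim_null_comparison[OF _ tendsto_mult_right_zero[OF tendsto_add_zero[OF us(2) vs(2)]]]
          always_eventually) auto
    ultimately have "(\<lambda>n. (T (us n) y - T (vs n) y) - (T (us n) y - w1 y) + (T (vs n) y - w2 y)) \<longlonglongrightarrow> 0 - 0 + 0"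
      by (intro tendsto_intros)
    then show "w1 y = w2 y" by (simp add: LIMSEQ_const_iff)
  qed
qed

lemma sum_mult_delta:
  assumes "finite F"
  shows "(\<Sum>x\<in>F. c x * delta y x) = (if y \<in> F then c y else 0)"
    and "(\<Sum>x\<in>F. c x * delta x y) = (if y \<in> F then c y else 0)"
proof -
  have "(\<Sum>x\<in>F. c x * delta y x) = (\<Sum>x\<in>F. if x = y then c x else 0)"
    "(\<Sum>x\<in>F. c x * delta x y) = (\<Sum>x\<in>F. if y = x then c x else 0)"
    by (auto simp: delta_def intro: sum.cong)
  then show "(\<Sum>x\<in>F. c x * delta y x) = (if y \<in> F then c y else 0)"
    "(\<Sum>x\<in>F. c x * delta x y) = (if y \<in> F then c y else 0)"
    using assms by simp_all
qed

lemma dspan_iff: "f \<in> dspan \<longleftrightarrow> (\<exists>F c. finite F \<and> f = (\<lambda>z. if z \<in> F then c z else 0))"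
  unfolding dspan_def by (auto simp: sum_mult_delta(2) cong: conj_cong)

lemma finite_support_in_l2:
  assumes "finite F" "\<And>z. z \<notin> F \<Longrightarrow> g z = 0"
  shows "g \<in> l2"
proof -
  have "(\<lambda>x. (cmod (g x))\<^sup>2) summable_on F" using assms(1) by simp
  moreover have "(\<lambda>x. (cmod (g x))\<^sup>2) summable_on UNIV \<longleftrightarrow> (\<lambda>x. (cmod (g x))\<^sup>2) summable_on F"
    by (rule summable_on_cong_neutral) (use assms(2) in auto)
  ultimately show ?thesis unfolding l2_def by simp
qed

lemma l2_ip_finite_support:
  assumes "finite F" "\<And>z. z \<notin> F \<Longrightarrow> cnj (g z) * h z = 0"
  shows "l2_ip g h = (\<Sum>x\<in>F. cnj (g x) * h x)"
proof -
  have "l2_ip g h = infsum (\<lambda>x. cnj (g x) * h x) F"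
    unfolding l2_ip_def by (rule infsum_cong_neutral) (use assms(2) in auto)
  then show ?thesis using assms(1) by simp
qed

lemma dspan_subset_l2: "f \<in> dspan \<Longrightarrow> f \<in> l2"
  unfolding dspan_iff by (auto intro: finite_support_in_l2)

lemma l2_diff:
  assumes "f \<in> l2" "g \<in> l2"
  shows "f - g \<in> l2"
proof -
  have "(\<lambda>x. 2 * (cmod (f x))\<^sup>2 + 2 * (cmod (g x))\<^sup>2) summable_on UNIV"
    using assms unfolding l2_def by (intro summable_on_add summable_on_cmult_right) auto
  moreover have "(cmod ((f - g) x))\<^sup>2 \<le> 2 * (cmod (f x))\<^sup>2 + 2 * (cmod (g x))\<^sup>2" for x
  proof -
    have "(cmod ((f - g) x))\<^sup>2 \<le> (cmod (f x) + cmod (g x))\<^sup>2"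
      by (simp add: norm_triangle_ineq4 power_mono)
    also have "\<dots> \<le> 2 * (cmod (f x))\<^sup>2 + 2 * (cmod (g x))\<^sup>2"
      using zero_le_power2[of "cmod (f x) - cmod (g x)"] unfolding power2_sum power2_diff by linarith
    finally show ?thesis .
  qed
  ultimately show ?thesis
    unfolding l2_def by (auto intro: summable_on_comparison_test)
qed

lemma norm_le_l2_norm:
  assumes "d \<in> l2"
  shows "cmod (d y) \<le> ipnorm l2_ip d"
proof -
  have summable: "(\<lambda>x. (cmod (d x))\<^sup>2) summable_on UNIV" using assms unfolding l2_def by simp
  have "cnj z * z = complex_of_real ((cmod z)\<^sup>2)" for z
    unfolding complex_norm_square by (rule mult.commute)
  then have "l2_ip d d = infsum (\<lambda>x. complex_of_real ((cmod (d x))\<^sup>2)) UNIV"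
    unfolding l2_ip_def by simp
  then have "Re (l2_ip d d) = infsum (\<lambda>x. (cmod (d x))\<^sup>2) UNIV"
    using infsum_Re[OF summable_on_of_real[OF summable]] by simp
  moreover have "infsum (\<lambda>x. (cmod (d x))\<^sup>2) {y} \<le> infsum (\<lambda>x. (cmod (d x))\<^sup>2) UNIV"
    by (rule infsum_mono_neutral) (use summable in auto)
  ultimately have "(cmod (d y))\<^sup>2 \<le> Re (l2_ip d d)" by simp
  then show ?thesis unfolding ipnorm_def by (simp add: real_le_rsqrt)
qed

section \<open>The pre-inner product on the span of the kernel functions\<close>

lemma le_mult_of_quadratic_nonneg:
  fixes A B X :: real
  assumes "A \<ge> 0" "B \<ge> 0" "\<And>t. 0 \<le> A - 2 * t * X + t\<^sup>2 * X * B"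
  shows "X \<le> A * B"
proof (cases "B = 0")
  case True
  show ?thesis
  proof (rule ccontr)
    assume "\<not> X \<le> A * B"
    with True have X: "X > 0" by simp
    have "0 \<le> A - 2 * (A / X + 1) * X" using assms(3)[of "A / X + 1"] True by simp
    moreover have "2 * (A / X + 1) * X = 2 * A + 2 * X" using X by (simp add: field_simps)
    ultimately show False using X assms(1) by linarith
  qed
next
  case False
  have "0 \<le> A - 2 * (1 / B) * X + (1 / B)\<^sup>2 * X * B" by (rule assms(3))
  with False assms(2) show ?thesis by (simp add: field_simps power2_eq_square)
qed

locale pd_kernel =
  fixes k :: "'v \<Rightarrow> 'v \<Rightarrow> complex"
  assumes pos_def: "pos_def_kernel k"
begin

lemma quadratic_form_nonneg:
  fixes c :: "'v \<Rightarrow> complex"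
  assumes "finite F"
  defines "s \<equiv> \<Sum>x\<in>F. \<Sum>y\<in>F. k x y * cnj (c x) * c y"
  shows "Im s = 0" "Re s \<ge> 0"
  using pos_def assms unfolding pos_def_kernel_def Let_def by blast+

lemma kernel_hermitian: "k y x = cnj (k x y)"
proof -
  have diag: "Im (k z z) = 0" for z
    using quadratic_form_nonneg(1)[of "{z}" "\<lambda>_. 1"] by simp
  show ?thesis
  proof (cases "x = y")
    case True
    with diag show ?thesis by (simp add: complex_eq_iff)
  next
    case False
    have "Im (k x y + k y x) = 0"
      using quadratic_form_nonneg(1)[of "{x, y}" "\<lambda>_. 1"] False diag[of x] diag[of y] by simp
    moreover have "Re (k x y - k y x) = 0"
      using quadratic_form_nonneg(1)[of "{x, y}" "\<lambda>z. if z = y then \<i> else 1"] False diag[of x] diag[of y]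
      by (simp add: algebra_simps)
    ultimately show ?thesis by (simp add: complex_eq_iff)
  qed
qed

definition kcomb :: "('v \<Rightarrow> complex) \<Rightarrow> 'v set \<Rightarrow> 'v \<Rightarrow> complex" where
  "kcomb c F = (\<lambda>z. \<Sum>x\<in>F. c x * kfun k x z)"

lemma kspan_iff: "f \<in> kspan k \<longleftrightarrow> (\<exists>F c. finite F \<and> f = kcomb c F)"
  unfolding kspan_def kcomb_def by simp

lemma kcomb_in_kspan: "finite F \<Longrightarrow> kcomb c F \<in> kspan k"
  unfolding kspan_iff by blast

lemma kfun_eq_kcomb: "kfun k y = kcomb (\<lambda>_. 1) {y}"
  unfolding kcomb_def by simp

lemma kfun_in_kspan: "kfun k y \<in> kspan k"
  by (simp add: kfun_eq_kcomb kcomb_in_kspan)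

lemma kcomb_extend:
  assumes "finite H" "F \<subseteq> H"
  shows "kcomb c F = kcomb (\<lambda>x. if x \<in> F then c x else 0) H"
  unfolding kcomb_def by (rule ext, rule sum.mono_neutral_cong_left) (use assms in auto)

lemma kcomb_lincomb:
  assumes "finite F" "finite G"
  shows "(\<lambda>z. a * kcomb c F z + b * kcomb d G z) =
    kcomb (\<lambda>x. a * (if x \<in> F then c x else 0) + b * (if x \<in> G then d x else 0)) (F \<union> G)"
proof -
  have "kcomb c F = kcomb (\<lambda>x. if x \<in> F then c x else 0) (F \<union> G)"
    "kcomb d G = kcomb (\<lambda>x. if x \<in> G then d x else 0) (F \<union> G)"
    using assms by (auto intro: kcomb_extend)
  then show ?thesis
    by (simp add: kcomb_def sum_distrib_left sum.distrib algebra_simps)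
qed

lemma kspan_lincomb:
  assumes "f \<in> kspan k" "g \<in> kspan k"
  shows "(\<lambda>z. a * f z + b * g z) \<in> kspan k"
proof -
  obtain F c G d where "finite F" "f = kcomb c F" "finite G" "g = kcomb d G"
    using assms unfolding kspan_iff by blast
  then show ?thesis by (simp add: kcomb_lincomb kcomb_in_kspan)
qed

lemma kspan_diff: "f \<in> kspan k \<Longrightarrow> g \<in> kspan k \<Longrightarrow> f - g \<in> kspan k"
  using kspan_lincomb[of f g 1 "-1"] by (simp add: fun_diff_def)

lemma sum_cnj_mult_kcomb:
  assumes "finite F" "finite G"
  shows "(\<Sum>x\<in>F. cnj (c x) * kcomb d G x) = (\<Sum>z\<in>G. d z * cnj (kcomb c F z))"
proof -
  have "(\<Sum>x\<in>F. cnj (c x) * kcomb d G x) = (\<Sum>x\<in>F. \<Sum>z\<in>G. cnj (c x) * d z * k x z)"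
    by (simp add: kcomb_def kfun_def sum_distrib_left mult.assoc)
  also have "\<dots> = (\<Sum>z\<in>G. \<Sum>x\<in>F. d z * (cnj (c x) * cnj (k z x)))"
  proof (subst sum.swap, intro sum.cong refl)
    fix z x
    show "cnj (c x) * d z * k x z = d z * (cnj (c x) * cnj (k z x))"
      by (subst kernel_hermitian) simp
  qed
  also have "\<dots> = (\<Sum>z\<in>G. d z * cnj (kcomb c F z))"
    by (simp add: kcomb_def kfun_def sum_distrib_left)
  finally show ?thesis .
qed

lemma pre_ip_some_repr:
  assumes "f \<in> kspan k"
  obtains F c where "finite F" "f = kcomb c F" "\<And>g. pre_ip k f g = (\<Sum>x\<in>F. cnj (c x) * g x)"
proof -
  define P where "P = (\<lambda>(F, c). finite F \<and> f = (\<lambda>z. \<Sum>x\<in>F. c x * kfun k x z))"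
  obtain F c where Fc: "(SOME p. P p) = (F, c)" by (cases "SOME p. P p")
  obtain F0 c0 where "finite F0" "f = kcomb c0 F0" using assms unfolding kspan_iff by blast
  then have "P (F0, c0)" unfolding P_def kcomb_def by simp
  then have "P (SOME p. P p)" by (rule someI)
  then have "P (F, c)" unfolding Fc .
  then have "finite F" "f = kcomb c F"
    unfolding P_def kcomb_def by simp_all
  moreover have "pre_ip k f g = (\<Sum>x\<in>F. cnj (c x) * g x)" for g
    using Fc unfolding pre_ip_def P_def Let_def by simp
  ultimately show ?thesis by (rule that)
qed

text \<open>\<open>pre_ip\<close> uses an arbitrarily chosen representation of its first argument; against an
  element of the span, its value only depends on the function (swap the double sum).\<close>

lemma pre_ip_kcomb:
  assumes "finite F" "g \<in> kspan k"
  shows "pre_ip k (kcomb c F) g = (\<Sum>x\<in>F. cnj (c x) * g x)"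
proof -
  obtain F' c' where F': "finite F'" "kcomb c F = kcomb c' F'"
    "\<And>g. pre_ip k (kcomb c F) g = (\<Sum>x\<in>F'. cnj (c' x) * g x)"
    using pre_ip_some_repr[OF kcomb_in_kspan[OF assms(1), of c]] by blast
  obtain G d where G: "finite G" "g = kcomb d G" using assms(2) unfolding kspan_iff by blast
  show ?thesis
    using F' G assms(1) by (simp add: sum_cnj_mult_kcomb)
qed

lemma pre_ip_lincomb_right:
  assumes "f \<in> kspan k"
  shows "pre_ip k f (\<lambda>z. a * g z + b * h z) = a * pre_ip k f g + b * pre_ip k f h"
  using assms by (rule pre_ip_some_repr) (simp add: sum_distrib_left sum.distrib algebra_simps)

lemma pre_ip_diff_right: "f \<in> kspan k \<Longrightarrow> pre_ip k f (g - h) = pre_ip k f g - pre_ip k f h"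
  using pre_ip_lincomb_right[of f 1 g "-1" h] by (simp add: fun_diff_def)

lemma pre_ip_commute:
  assumes "f \<in> kspan k" "g \<in> kspan k"
  shows "pre_ip k g f = cnj (pre_ip k f g)"
proof -
  obtain F c G d where F: "finite F" "f = kcomb c F" and G: "finite G" "g = kcomb d G"
    using assms unfolding kspan_iff by blast
  show ?thesis
    using assms F G by (simp add: pre_ip_kcomb sum_cnj_mult_kcomb mult.commute)
qed

lemma pre_ip_self:
  assumes "f \<in> kspan k"
  shows "Im (pre_ip k f f) = 0" "Re (pre_ip k f f) \<ge> 0"
proof -
  obtain F c where F: "finite F" "f = kcomb c F" using assms unfolding kspan_iff by blast
  have "pre_ip k f f = (\<Sum>x\<in>F. cnj (c x) * kcomb c F x)"
    using pre_ip_kcomb[OF F(1) assms] F(2) by simp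
  also have "\<dots> = (\<Sum>x\<in>F. \<Sum>y\<in>F. k x y * cnj (c x) * c y)"
    by (simp add: kcomb_def kfun_def sum_distrib_left mult_ac)
  finally have "pre_ip k f f = (\<Sum>x\<in>F. \<Sum>y\<in>F. k x y * cnj (c x) * c y)" .
  then show "Im (pre_ip k f f) = 0" "Re (pre_ip k f f) \<ge> 0"
    using quadratic_form_nonneg[OF F(1)] by simp_all
qed

lemma kspan_add: "f \<in> kspan k \<Longrightarrow> g \<in> kspan k \<Longrightarrow> (\<lambda>z. f z + g z) \<in> kspan k"
  using kspan_lincomb[of f g 1 1] by simp

lemma kspan_scale: "f \<in> kspan k \<Longrightarrow> (\<lambda>z. a * f z) \<in> kspan k"
  using kspan_lincomb[of f f a 0] by simp

abbreviation pnorm :: "('v \<Rightarrow> complex) \<Rightarrow> real" where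
  "pnorm \<equiv> ipnorm (pre_ip k)"

lemma pnorm_nonneg: "f \<in> kspan k \<Longrightarrow> pnorm f \<ge> 0"
  by (simp add: ipnorm_def pre_ip_self(2))

lemma pre_ip_self_eq: "f \<in> kspan k \<Longrightarrow> pre_ip k f f = of_real ((pnorm f)\<^sup>2)"
  using pre_ip_self[of f] by (simp add: ipnorm_def complex_eq_iff)

lemma norm_pre_ip_le:
  assumes "f \<in> kspan k" "g \<in> kspan k"
  shows "cmod (pre_ip k f g) \<le> pnorm f * pnorm g"
proof -
  define w where "w = pre_ip k f g"
  define A where "A = (pnorm f)\<^sup>2"
  define B where "B = (pnorm g)\<^sup>2"
  have gf: "pre_ip k g f = cnj w" unfolding w_def by (rule pre_ip_commute[OF assms])
  \<comment> \<open>expand the norm of f - t cnj w g, which is nonnegative for every real t\<close>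
  have "0 \<le> A - 2 * t * (cmod w)\<^sup>2 + t\<^sup>2 * (cmod w)\<^sup>2 * B" for t
  proof -
    define \<mu> where "\<mu> = of_real t * cnj w"
    define h where "h = (\<lambda>z. 1 * f z + (- \<mu>) * g z)"
    have h: "h \<in> kspan k" unfolding h_def by (rule kspan_lincomb[OF assms])
    have "pre_ip k h h = cnj (pre_ip k f h) - \<mu> * cnj (pre_ip k g h)"
      using pre_ip_lincomb_right[OF h, of 1 f "-\<mu>" g] pre_ip_commute[OF assms(1) h]
        pre_ip_commute[OF assms(2) h] unfolding h_def by simp
    also have "\<dots> = of_real (A - 2 * t * (cmod w)\<^sup>2 + t\<^sup>2 * (cmod w)\<^sup>2 * B)"
      unfolding h_def pre_ip_lincomb_right[OF assms(1)] pre_ip_lincomb_right[OF assms(2)]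
        pre_ip_self_eq[OF assms(1)] pre_ip_self_eq[OF assms(2)] gf w_def[symmetric]
        \<mu>_def A_def B_def cmod_power2
      by (simp add: complex_eq_iff power2_eq_square algebra_simps)
    finally show ?thesis using pre_ip_self(2)[OF h] by simp
  qed
  then have "(cmod w)\<^sup>2 \<le> A * B"
    by (intro le_mult_of_quadratic_nonneg) (simp_all add: A_def B_def)
  then have "cmod w \<le> sqrt (A * B)" by (simp add: real_le_rsqrt)
  with pnorm_nonneg[OF assms(1)] pnorm_nonneg[OF assms(2)] show ?thesis
    by (simp add: w_def A_def B_def real_sqrt_mult)
qed

lemma pnorm_scale:
  assumes "f \<in> kspan k"
  shows "pnorm (\<lambda>z. a * f z) = cmod a * pnorm f"
proof -
  have "pre_ip k (\<lambda>z. a * f z) (\<lambda>z. a * f z) = a * cnj a * of_real ((pnorm f)\<^sup>2)"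
    using pre_ip_lincomb_right[OF kspan_scale[OF assms, of a], of a f 0 f]
      pre_ip_commute[OF assms kspan_scale[OF assms, of a]] pre_ip_lincomb_right[OF assms, of a f 0 f]
    by (simp add: pre_ip_self_eq[OF assms])
  also have "\<dots> = of_real ((cmod a * pnorm f)\<^sup>2)"
    by (simp only: power_mult_distrib of_real_mult complex_norm_square)
  finally show ?thesis by (simp add: ipnorm_def pre_ip_self(2)[OF assms])
qed

lemma pnorm_add_le:
  assumes "f \<in> kspan k" "g \<in> kspan k"
  shows "pnorm (\<lambda>z. f z + g z) \<le> pnorm f + pnorm g"
proof -
  define s where "s = (\<lambda>z. f z + g z)"
  have s: "s \<in> kspan k" unfolding s_def by (rule kspan_add[OF assms])
  have "pre_ip k s s = cnj (pre_ip k f s) + cnj (pre_ip k g s)"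
    using pre_ip_lincomb_right[OF s, of 1 f 1 g] pre_ip_commute[OF assms(1) s]
      pre_ip_commute[OF assms(2) s] by (simp add: s_def)
  then have "Re (pre_ip k s s) = (pnorm f)\<^sup>2 + 2 * Re (pre_ip k f g) + (pnorm g)\<^sup>2"
    using pre_ip_lincomb_right[OF assms(1), of 1 f 1 g] pre_ip_lincomb_right[OF assms(2), of 1 f 1 g]
      pre_ip_self_eq[OF assms(1)] pre_ip_self_eq[OF assms(2)] pre_ip_commute[OF assms]
    by (simp add: s_def)
  also have "\<dots> \<le> (pnorm f + pnorm g)\<^sup>2"
    using norm_pre_ip_le[OF assms] complex_Re_le_cmod[of "pre_ip k f g"]
    by (simp add: power2_sum)
  finally have "pnorm s \<le> sqrt ((pnorm f + pnorm g)\<^sup>2)"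
    unfolding ipnorm_def by (rule real_sqrt_le_mono)
  with pnorm_nonneg[OF assms(1)] pnorm_nonneg[OF assms(2)] show ?thesis
    by (simp add: s_def)
qed

lemma pnorm_lincomb_le:
  assumes "f \<in> kspan k" "g \<in> kspan k"
  shows "pnorm (\<lambda>z. a * f z + b * g z) \<le> cmod a * pnorm f + cmod b * pnorm g"
  using pnorm_add_le[OF kspan_scale[OF assms(1)] kspan_scale[OF assms(2)]]
  by (simp add: pnorm_scale assms)

lemma pnorm_diff_le: "f \<in> kspan k \<Longrightarrow> g \<in> kspan k \<Longrightarrow> pnorm (f - g) \<le> pnorm f + pnorm g"
  using pnorm_lincomb_le[of f g 1 "-1"] by (simp add: fun_diff_def)

lemma pnorm_diff_commute: "f \<in> kspan k \<Longrightarrow> g \<in> kspan k \<Longrightarrow> pnorm (f - g) = pnorm (g - f)"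
  using pnorm_scale[OF kspan_diff, of f g "-1"] by (simp add: fun_diff_def)

lemma abs_pnorm_diff_le:
  assumes "f \<in> kspan k" "g \<in> kspan k"
  shows "\<bar>pnorm f - pnorm g\<bar> \<le> pnorm (f - g)"
proof -
  have "pnorm f \<le> pnorm (f - g) + pnorm g" "pnorm g \<le> pnorm (g - f) + pnorm f"
    using pnorm_add_le[OF kspan_diff[OF assms] assms(2)]
      pnorm_add_le[OF kspan_diff[OF assms(2,1)] assms(1)] by (simp_all add: fun_diff_def)
  then show ?thesis using pnorm_diff_commute[OF assms] by linarith
qed

section \<open>Approximating sequences and the inner product of the RKHS\<close>

lemma Re_pre_ip_self: "f \<in> kspan k \<Longrightarrow> Re (pre_ip k f f) = (pnorm f)\<^sup>2"
  by (simp add: pre_ip_self_eq)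

lemma approx_seq_iff:
  "approx_seq k \<phi> fs \<longleftrightarrow> (\<forall>n. fs n \<in> kspan k) \<and>
     (\<forall>e>0. \<exists>M. \<forall>m\<ge>M. \<forall>n\<ge>M. pnorm (fs m - fs n) < e) \<and> (\<forall>x. (\<lambda>n. fs n x) \<longlonglongrightarrow> \<phi> x)"
proof -
  have less_iff: "pnorm f < e \<longleftrightarrow> Re (pre_ip k f f) < e\<^sup>2" if "f \<in> kspan k" "e > 0" for f e
    using that pre_ip_self(2)[OF that(1)]
    by (simp add: ipnorm_def) (metis abs_of_pos real_sqrt_abs real_sqrt_less_iff)
  show ?thesis
  proof (cases "\<forall>n. fs n \<in> kspan k")
    case True
    then have diff: "fs m - fs n \<in> kspan k" for m n by (simp add: kspan_diff)
    have "(\<forall>e>0. \<exists>M. \<forall>m\<ge>M. \<forall>n\<ge>M. Re (pre_ip k (fs m - fs n) (fs m - fs n)) < e) \<longleftrightarrow>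
          (\<forall>e>0. \<exists>M. \<forall>m\<ge>M. \<forall>n\<ge>M. pnorm (fs m - fs n) < e)"
    proof safe
      fix e :: real assume "e > 0" and H: "\<forall>e>0. \<exists>M. \<forall>m\<ge>M. \<forall>n\<ge>M. Re (pre_ip k (fs m - fs n) (fs m - fs n)) < e"
      then show "\<exists>M. \<forall>m\<ge>M. \<forall>n\<ge>M. pnorm (fs m - fs n) < e"
        using H[rule_format, of "e\<^sup>2"] less_iff[OF diff] by simp
    next
      fix e :: real assume "e > 0" and H: "\<forall>e>0. \<exists>M. \<forall>m\<ge>M. \<forall>n\<ge>M. pnorm (fs m - fs n) < e"
      then show "\<exists>M. \<forall>m\<ge>M. \<forall>n\<ge>M. Re (pre_ip k (fs m - fs n) (fs m - fs n)) < e"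
        using H[rule_format, of "sqrt e"] less_iff[OF diff, of "sqrt e"] by simp
    qed
    with True show ?thesis unfolding approx_seq_def by blast
  qed (auto simp: approx_seq_def)
qed

lemma approx_seq_in_kspan: "approx_seq k \<phi> fs \<Longrightarrow> fs n \<in> kspan k"
  unfolding approx_seq_def by blast

lemma approx_seq_pointwise: "approx_seq k \<phi> fs \<Longrightarrow> (\<lambda>n. fs n x) \<longlonglongrightarrow> \<phi> x"
  unfolding approx_seq_def by blast

lemma approx_seq_cauchy:
  "approx_seq k \<phi> fs \<Longrightarrow> e > 0 \<Longrightarrow> \<exists>M. \<forall>m\<ge>M. \<forall>n\<ge>M. pnorm (fs m - fs n) < e"
  unfolding approx_seq_iff by blast

lemma approx_seq_pnorm_bounded:
  assumes "approx_seq k \<phi> fs"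
  obtains B where "B > 0" "\<And>n. pnorm (fs n) \<le> B"
proof -
  note in_kspan = approx_seq_in_kspan[OF assms]
  have "Cauchy (\<lambda>n. pnorm (fs n))"
  proof (rule metric_CauchyI)
    fix e :: real assume "e > 0"
    then obtain M where "\<forall>m\<ge>M. \<forall>n\<ge>M. pnorm (fs m - fs n) < e"
      using approx_seq_cauchy[OF assms] by blast
    then show "\<exists>M. \<forall>m\<ge>M. \<forall>n\<ge>M. dist (pnorm (fs m)) (pnorm (fs n)) < e"
      using abs_pnorm_diff_le[OF in_kspan in_kspan] unfolding dist_real_def by (meson le_less_trans)
  qed
  then have "Bseq (\<lambda>n. pnorm (fs n))" by (rule Cauchy_Bseq)
  then obtain K where "K > 0" "\<And>n. \<bar>pnorm (fs n)\<bar> \<le> K"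
    unfolding Bseq_def real_norm_def by blast
  then show ?thesis by (intro that[of K]) (auto intro: order_trans[OF abs_ge_self])
qed

lemma approx_seq_lincomb:
  assumes "approx_seq k \<phi> fs" "approx_seq k \<psi> gs"
  shows "approx_seq k (\<lambda>z. a * \<phi> z + b * \<psi> z) (\<lambda>n z. a * fs n z + b * gs n z)"
  unfolding approx_seq_iff
proof (intro conjI allI impI)
  note fs = approx_seq_in_kspan[OF assms(1)] and gs = approx_seq_in_kspan[OF assms(2)]
  show "(\<lambda>z. a * fs n z + b * gs n z) \<in> kspan k" for n by (rule kspan_lincomb[OF fs gs])
  show "(\<lambda>n. a * fs n x + b * gs n x) \<longlonglongrightarrow> a * \<phi> x + b * \<psi> x" for x
    by (intro tendsto_intros approx_seq_pointwise[OF assms(1)] approx_seq_pointwise[OF assms(2)])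
  fix e :: real assume "e > 0"
  define e' where "e' = e / (cmod a + cmod b + 1)"
  have D: "cmod a + cmod b + 1 > 0" by (simp add: add_nonneg_pos)
  then have "e' > 0" using \<open>e > 0\<close> by (simp add: e'_def)
  then have "(cmod a + cmod b) * e' < (cmod a + cmod b + 1) * e'" by simp
  also have "\<dots> = e" using D by (simp add: e'_def)
  finally have "(cmod a + cmod b) * e' < e" .
  obtain M1 M2 where M1: "\<forall>m\<ge>M1. \<forall>n\<ge>M1. pnorm (fs m - fs n) < e'"
    and M2: "\<forall>m\<ge>M2. \<forall>n\<ge>M2. pnorm (gs m - gs n) < e'"
    using approx_seq_cauchy[OF assms(1) \<open>e' > 0\<close>] approx_seq_cauchy[OF assms(2) \<open>e' > 0\<close>] by blast
  have "pnorm ((\<lambda>z. a * fs m z + b * gs m z) - (\<lambda>z. a * fs n z + b * gs n z)) < e"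
    if "m \<ge> max M1 M2" "n \<ge> max M1 M2" for m n
  proof -
    have "pnorm ((\<lambda>z. a * fs m z + b * gs m z) - (\<lambda>z. a * fs n z + b * gs n z)) =
          pnorm (\<lambda>z. a * (fs m - fs n) z + b * (gs m - gs n) z)"
      by (rule arg_cong[where f = pnorm]) (simp add: fun_eq_iff algebra_simps)
    also have "\<dots> \<le> cmod a * pnorm (fs m - fs n) + cmod b * pnorm (gs m - gs n)"
      by (rule pnorm_lincomb_le[OF kspan_diff[OF fs fs] kspan_diff[OF gs gs]])
    also have "\<dots> \<le> cmod a * e' + cmod b * e'"
      using M1 M2 that by (intro add_mono mult_left_mono) (simp_all add: less_imp_le)
    also have "\<dots> = (cmod a + cmod b) * e'" by (simp add: distrib_right)
    finally show ?thesis using \<open>(cmod a + cmod b) * e' < e\<close> by linarith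
  qed
  then show "\<exists>M. \<forall>m\<ge>M. \<forall>n\<ge>M.
      pnorm ((\<lambda>z. a * fs m z + b * gs m z) - (\<lambda>z. a * fs n z + b * gs n z)) < e"
    by blast
qed

lemma approx_seq_diff:
  "approx_seq k \<phi> fs \<Longrightarrow> approx_seq k \<psi> gs \<Longrightarrow> approx_seq k (\<phi> - \<psi>) (\<lambda>n. fs n - gs n)"
  using approx_seq_lincomb[of \<phi> fs \<psi> gs 1 "-1"] by (simp add: fun_diff_def)

lemma approx_seq_const: "f \<in> kspan k \<Longrightarrow> approx_seq k f (\<lambda>n. f)"
  unfolding approx_seq_iff by (simp add: ipnorm_def pre_ip_diff_right kspan_diff)

lemma approx_seq_null:
  assumes "approx_seq k (\<lambda>_. 0) hs"
  shows "(\<lambda>n. pnorm (hs n)) \<longlonglongrightarrow> 0"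
proof -
  note hs = approx_seq_in_kspan[OF assms]
  obtain B where B: "B > 0" "\<And>n. pnorm (hs n) \<le> B"
    using approx_seq_pnorm_bounded[OF assms] by blast
  have "(\<lambda>n. (pnorm (hs n))\<^sup>2) \<longlonglongrightarrow> 0"
  proof (rule LIMSEQ_I)
    fix r :: real assume "r > 0"
    then obtain M where M: "\<forall>m\<ge>M. \<forall>n\<ge>M. pnorm (hs m - hs n) < r / (2 * B)"
      using approx_seq_cauchy[OF assms, of "r / (2 * B)"] B by auto
    obtain F c where "finite F" "hs M = kcomb c F"
      and F: "\<And>g. pre_ip k (hs M) g = (\<Sum>x\<in>F. cnj (c x) * g x)"
      using pre_ip_some_repr[OF hs, of M] by blast
    have "(\<lambda>n. \<Sum>x\<in>F. cnj (c x) * hs n x) \<longlonglongrightarrow> (\<Sum>x\<in>F. cnj (c x) * 0)"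
      by (intro tendsto_intros approx_seq_pointwise[OF assms])
    then have "(\<lambda>n. pre_ip k (hs M) (hs n)) \<longlonglongrightarrow> 0" by (simp add: F)
    from LIMSEQ_D[OF this, of "r / 2"] obtain M' where M': "\<forall>n\<ge>M'. cmod (pre_ip k (hs M) (hs n)) < r / 2"
      using \<open>r > 0\<close> by auto
    \<comment> \<open>split \<open>pnorm (hs n)\<^sup>2\<close> as \<open>pre_ip k (hs n) (hs n - hs M)\<close>, small by the Cauchy property,
      plus the conjugate of \<open>pre_ip k (hs M) (hs n)\<close>, small by pointwise convergence\<close>
    have "norm ((pnorm (hs n))\<^sup>2 - 0) < r" if "n \<ge> max M M'" for n
    proof -
      have "(pnorm (hs n))\<^sup>2 = Re (pre_ip k (hs n) (hs n - hs M) + cnj (pre_ip k (hs M) (hs n)))"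
        using pre_ip_diff_right[OF hs, of n "hs n" "hs M"] pre_ip_commute[OF hs hs, of M n]
          Re_pre_ip_self[OF hs, of n] by simp
      also have "\<dots> \<le> cmod (pre_ip k (hs n) (hs n - hs M) + cnj (pre_ip k (hs M) (hs n)))"
        by (rule complex_Re_le_cmod)
      also have "\<dots> \<le> cmod (pre_ip k (hs n) (hs n - hs M)) + cmod (pre_ip k (hs M) (hs n))"
        using norm_triangle_ineq[of _ "cnj (pre_ip k (hs M) (hs n))"] by simp
      also have "cmod (pre_ip k (hs n) (hs n - hs M)) \<le> pnorm (hs n) * pnorm (hs n - hs M)"
        by (rule norm_pre_ip_le[OF hs kspan_diff[OF hs hs]])
      also have "\<dots> \<le> B * (r / (2 * B))"
        using B M that by (intro mult_mono) (simp_all add: less_imp_le pnorm_nonneg[OF kspan_diff[OF hs hs]])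
      also have "\<dots> = r / 2" using B by simp
      finally show ?thesis using M'[rule_format, of n] that by simp
    qed
    then show "\<exists>M. \<forall>n\<ge>M. norm ((pnorm (hs n))\<^sup>2 - 0) < r" by blast
  qed
  then have "(\<lambda>n. sqrt ((pnorm (hs n))\<^sup>2)) \<longlonglongrightarrow> sqrt 0" by (rule tendsto_real_sqrt)
  then show ?thesis using pnorm_nonneg[OF hs] by simp
qed

lemma norm_pre_ip_diff_le:
  assumes "f \<in> kspan k" "f' \<in> kspan k" "g \<in> kspan k" "g' \<in> kspan k"
  shows "cmod (pre_ip k f g - pre_ip k f' g') \<le> pnorm f * pnorm (g - g') + pnorm g' * pnorm (f - f')"
proof -
  have "pre_ip k f g - pre_ip k f' g' = pre_ip k f (g - g') + cnj (pre_ip k g' (f - f'))"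
    using pre_ip_diff_right[OF assms(1), of g g'] pre_ip_diff_right[OF assms(4), of f f']
      pre_ip_commute[OF assms(4,1)] pre_ip_commute[OF assms(4,2)] by simp
  then have "cmod (pre_ip k f g - pre_ip k f' g') \<le> cmod (pre_ip k f (g - g')) + cmod (pre_ip k g' (f - f'))"
    by (metis complex_mod_cnj norm_triangle_ineq)
  also have "\<dots> \<le> pnorm f * pnorm (g - g') + pnorm g' * pnorm (f - f')"
    by (intro add_mono norm_pre_ip_le assms kspan_diff)
  finally show ?thesis .
qed

lemma pre_ip_approx_convergent:
  assumes "approx_seq k \<phi> fs" "approx_seq k \<psi> gs"
  shows "convergent (\<lambda>n. pre_ip k (fs n) (gs n))"
proof -
  note fs = approx_seq_in_kspan[OF assms(1)] and gs = approx_seq_in_kspan[OF assms(2)]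
  obtain Bf where Bf: "Bf > 0" "\<And>n. pnorm (fs n) \<le> Bf"
    using approx_seq_pnorm_bounded[OF assms(1)] by blast
  obtain Bg where Bg: "Bg > 0" "\<And>n. pnorm (gs n) \<le> Bg"
    using approx_seq_pnorm_bounded[OF assms(2)] by blast
  have "Cauchy (\<lambda>n. pre_ip k (fs n) (gs n))"
  proof (rule metric_CauchyI)
    fix e :: real assume "e > 0"
    define e' where "e' = e / (2 * (Bf + Bg))"
    have "e' > 0" using \<open>e > 0\<close> Bf Bg by (simp add: e'_def)
    have "(Bf + Bg) * e' = e / 2" using Bf Bg by (simp add: e'_def field_simps)
    then have "(Bf + Bg) * e' < e" using \<open>e > 0\<close> by simp
    obtain M1 M2 where M1: "\<forall>m\<ge>M1. \<forall>n\<ge>M1. pnorm (fs m - fs n) < e'"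
      and M2: "\<forall>m\<ge>M2. \<forall>n\<ge>M2. pnorm (gs m - gs n) < e'"
      using approx_seq_cauchy[OF assms(1) \<open>e' > 0\<close>] approx_seq_cauchy[OF assms(2) \<open>e' > 0\<close>] by blast
    have "dist (pre_ip k (fs m) (gs m)) (pre_ip k (fs n) (gs n)) < e"
      if "m \<ge> max M1 M2" "n \<ge> max M1 M2" for m n
    proof -
      have "dist (pre_ip k (fs m) (gs m)) (pre_ip k (fs n) (gs n))
          \<le> pnorm (fs m) * pnorm (gs m - gs n) + pnorm (gs n) * pnorm (fs m - fs n)"
        unfolding dist_norm by (rule norm_pre_ip_diff_le[OF fs fs gs gs])
      also have "\<dots> \<le> Bf * e' + Bg * e'"
        using Bf Bg M1 M2 that pnorm_nonneg[OF fs] pnorm_nonneg[OF gs]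
          pnorm_nonneg[OF kspan_diff[OF fs fs]] pnorm_nonneg[OF kspan_diff[OF gs gs]]
        by (intro add_mono mult_mono) (simp_all add: less_imp_le)
      finally show ?thesis using \<open>(Bf + Bg) * e' < e\<close> by (simp add: distrib_right)
    qed
    then show "\<exists>M. \<forall>m\<ge>M. \<forall>n\<ge>M. dist (pre_ip k (fs m) (gs m)) (pre_ip k (fs n) (gs n)) < e"
      by blast
  qed
  then show ?thesis by (simp add: Cauchy_convergent_iff)
qed

lemma pre_ip_approx_unique:
  assumes "approx_seq k \<phi> fs" "approx_seq k \<phi> fs'" "approx_seq k \<psi> gs" "approx_seq k \<psi> gs'"
  shows "(\<lambda>n. pre_ip k (fs n) (gs n) - pre_ip k (fs' n) (gs' n)) \<longlonglongrightarrow> 0"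
proof -
  note fs = approx_seq_in_kspan[OF assms(1)] and fs' = approx_seq_in_kspan[OF assms(2)]
    and gs = approx_seq_in_kspan[OF assms(3)] and gs' = approx_seq_in_kspan[OF assms(4)]
  obtain Bf where Bf: "\<And>n. pnorm (fs n) \<le> Bf"
    using approx_seq_pnorm_bounded[OF assms(1)] by blast
  obtain Bg where Bg: "\<And>n. pnorm (gs' n) \<le> Bg"
    using approx_seq_pnorm_bounded[OF assms(4)] by blast
  have "\<phi> - \<phi> = (\<lambda>_. 0)" "\<psi> - \<psi> = (\<lambda>_. 0)" by (simp_all add: fun_diff_def)
  then have null: "(\<lambda>n. pnorm (fs n - fs' n)) \<longlonglongrightarrow> 0" "(\<lambda>n. pnorm (gs n - gs' n)) \<longlonglongrightarrow> 0"
    using approx_seq_diff[OF assms(1,2)] approx_seq_diff[OF assms(3,4)]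
    by (simp_all only: approx_seq_null)
  have "(\<lambda>n. Bf * pnorm (gs n - gs' n) + Bg * pnorm (fs n - fs' n)) \<longlonglongrightarrow> Bf * 0 + Bg * 0"
    by (intro tendsto_intros null)
  then have bound: "(\<lambda>n. Bf * pnorm (gs n - gs' n) + Bg * pnorm (fs n - fs' n)) \<longlonglongrightarrow> 0"
    by simp
  show ?thesis
  proof (rule Lim_null_comparison[OF _ bound], intro always_eventually allI)
    fix n
    have "cmod (pre_ip k (fs n) (gs n) - pre_ip k (fs' n) (gs' n))
        \<le> pnorm (fs n) * pnorm (gs n - gs' n) + pnorm (gs' n) * pnorm (fs n - fs' n)"
      by (rule norm_pre_ip_diff_le[OF fs fs' gs gs'])
    also have "\<dots> \<le> Bf * pnorm (gs n - gs' n) + Bg * pnorm (fs n - fs' n)"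
      using Bf Bg pnorm_nonneg[OF kspan_diff[OF fs fs']] pnorm_nonneg[OF kspan_diff[OF gs gs']]
      by (intro add_mono mult_right_mono) auto
    finally show "norm (pre_ip k (fs n) (gs n) - pre_ip k (fs' n) (gs' n))
        \<le> Bf * pnorm (gs n - gs' n) + Bg * pnorm (fs n - fs' n)" by simp
  qed
qed

lemma tendsto_rkhs_ip:
  assumes "approx_seq k \<phi> fs" "approx_seq k \<psi> gs"
  shows "(\<lambda>n. pre_ip k (fs n) (gs n)) \<longlonglongrightarrow> rkhs_ip k \<phi> \<psi>"
proof -
  define fs0 where "fs0 = (SOME fs. approx_seq k \<phi> fs)"
  define gs0 where "gs0 = (SOME gs. approx_seq k \<psi> gs)"
  have fs0: "approx_seq k \<phi> fs0" unfolding fs0_def by (rule someI[of "approx_seq k \<phi>" fs, OF assms(1)])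
  have gs0: "approx_seq k \<psi> gs0" unfolding gs0_def by (rule someI[of "approx_seq k \<psi>" gs, OF assms(2)])
  have "rkhs_ip k \<phi> \<psi> = lim (\<lambda>n. pre_ip k (fs0 n) (gs0 n))"
    unfolding rkhs_ip_def fs0_def gs0_def ..
  then have "(\<lambda>n. pre_ip k (fs0 n) (gs0 n)) \<longlonglongrightarrow> rkhs_ip k \<phi> \<psi>"
    using pre_ip_approx_convergent[OF fs0 gs0] by (simp add: convergent_LIMSEQ_iff)
  then have "(\<lambda>n. pre_ip k (fs0 n) (gs0 n) + (pre_ip k (fs n) (gs n) - pre_ip k (fs0 n) (gs0 n)))
      \<longlonglongrightarrow> rkhs_ip k \<phi> \<psi> + 0"
    by (intro tendsto_intros pre_ip_approx_unique[OF assms(1) fs0 assms(2) gs0])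
  then show ?thesis by simp
qed

lemma tendsto_rkhs_norm:
  assumes "approx_seq k \<phi> fs"
  shows "(\<lambda>n. pnorm (fs n)) \<longlonglongrightarrow> ipnorm (rkhs_ip k) \<phi>"
  unfolding ipnorm_def by (intro tendsto_intros tendsto_rkhs_ip assms)


section \<open>The reproducing kernel Hilbert space\<close>

abbreviation hnorm :: "('v \<Rightarrow> complex) \<Rightarrow> real" where
  "hnorm \<equiv> ipnorm (rkhs_ip k)"

lemma rkhs_iff: "\<phi> \<in> rkhs k \<longleftrightarrow> (\<exists>fs. approx_seq k \<phi> fs)"
  by (simp add: rkhs_def)

lemma kspan_subset_rkhs: "f \<in> kspan k \<Longrightarrow> f \<in> rkhs k"
  using approx_seq_const rkhs_iff by blast

lemma rkhs_lincomb: "\<phi> \<in> rkhs k \<Longrightarrow> \<psi> \<in> rkhs k \<Longrightarrow> (\<lambda>z. a * \<phi> z + b * \<psi> z) \<in> rkhs k"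
  unfolding rkhs_iff using approx_seq_lincomb by blast

lemma rkhs_diff: "\<phi> \<in> rkhs k \<Longrightarrow> \<psi> \<in> rkhs k \<Longrightarrow> \<phi> - \<psi> \<in> rkhs k"
  using approx_seq_diff rkhs_iff by blast

lemma rkhs_norm_nonneg: "\<phi> \<in> rkhs k \<Longrightarrow> hnorm \<phi> \<ge> 0"
  unfolding rkhs_iff
  by (auto intro: LIMSEQ_le_const[OF tendsto_rkhs_norm] pnorm_nonneg approx_seq_in_kspan)

lemma rkhs_norm_kspan: "f \<in> kspan k \<Longrightarrow> hnorm f = pnorm f"
  using tendsto_rkhs_norm[OF approx_seq_const] by (simp add: LIMSEQ_const_iff)

lemma rkhs_norm_diff_le:
  assumes "\<phi> \<in> rkhs k" "\<psi> \<in> rkhs k"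
  shows "hnorm (\<phi> - \<psi>) \<le> hnorm \<phi> + hnorm \<psi>"
proof -
  obtain fs gs where fs: "approx_seq k \<phi> fs" and gs: "approx_seq k \<psi> gs"
    using assms unfolding rkhs_iff by blast
  show ?thesis
    by (rule LIMSEQ_le[OF tendsto_rkhs_norm[OF approx_seq_diff[OF fs gs]]
          tendsto_add[OF tendsto_rkhs_norm[OF fs] tendsto_rkhs_norm[OF gs]]])
      (use pnorm_diff_le[OF approx_seq_in_kspan[OF fs] approx_seq_in_kspan[OF gs]] in auto)
qed

lemma rkhs_ip_kcomb:
  assumes "finite F" "\<psi> \<in> rkhs k"
  shows "rkhs_ip k (kcomb c F) \<psi> = (\<Sum>x\<in>F. cnj (c x) * \<psi> x)"
proof -
  obtain gs where gs: "approx_seq k \<psi> gs" using assms(2) unfolding rkhs_iff by blast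
  have "(\<lambda>n. pre_ip k (kcomb c F) (gs n)) \<longlonglongrightarrow> (\<Sum>x\<in>F. cnj (c x) * \<psi> x)"
    unfolding pre_ip_kcomb[OF assms(1) approx_seq_in_kspan[OF gs]]
    by (intro tendsto_intros approx_seq_pointwise[OF gs])
  with tendsto_rkhs_ip[OF approx_seq_const[OF kcomb_in_kspan[OF assms(1)]] gs] show ?thesis
    by (rule LIMSEQ_unique)
qed

lemma rkhs_ip_kspan_commute:
  assumes "f \<in> kspan k" "\<psi> \<in> rkhs k"
  shows "rkhs_ip k \<psi> f = cnj (rkhs_ip k f \<psi>)"
proof -
  obtain gs where gs: "approx_seq k \<psi> gs" using assms(2) unfolding rkhs_iff by blast
  have "(\<lambda>n. cnj (pre_ip k f (gs n))) \<longlonglongrightarrow> cnj (rkhs_ip k f \<psi>)"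
    by (intro tendsto_cnj tendsto_rkhs_ip approx_seq_const assms(1) gs)
  then have "(\<lambda>n. pre_ip k (gs n) f) \<longlonglongrightarrow> cnj (rkhs_ip k f \<psi>)"
    by (simp add: pre_ip_commute[OF assms(1) approx_seq_in_kspan[OF gs]])
  with tendsto_rkhs_ip[OF gs approx_seq_const[OF assms(1)]] show ?thesis
    by (rule LIMSEQ_unique)
qed

lemma norm_rkhs_ip_le:
  assumes "f \<in> kspan k" "\<psi> \<in> rkhs k"
  shows "cmod (rkhs_ip k f \<psi>) \<le> pnorm f * hnorm \<psi>"
proof -
  obtain gs where gs: "approx_seq k \<psi> gs" using assms(2) unfolding rkhs_iff by blast
  show ?thesis
    by (rule LIMSEQ_le[OF tendsto_norm[OF tendsto_rkhs_ip[OF approx_seq_const[OF assms(1)] gs]]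
          tendsto_mult[OF tendsto_const tendsto_rkhs_norm[OF gs]]])
      (use norm_pre_ip_le[OF assms(1) approx_seq_in_kspan[OF gs]] in auto)
qed

lemma rkhs_ip_kfun: "\<psi> \<in> rkhs k \<Longrightarrow> rkhs_ip k (kfun k y) \<psi> = \<psi> y"
  by (simp add: kfun_eq_kcomb rkhs_ip_kcomb)

lemma norm_le_rkhs_norm: "\<psi> \<in> rkhs k \<Longrightarrow> cmod (\<psi> y) \<le> pnorm (kfun k y) * hnorm \<psi>"
  using norm_rkhs_ip_le[OF kfun_in_kspan] by (simp add: rkhs_ip_kfun)

end

section \<open>The operators \<open>T\<close> and \<open>S\<close>\<close>

locale pd_kernel_deltas = pd_kernel k for k :: "'v \<Rightarrow> 'v \<Rightarrow> complex" +
  assumes delta_in_rkhs: "\<And>x. delta x \<in> rkhs k"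
begin

lemma dspan_subset_rkhs:
  assumes "f \<in> dspan"
  shows "f \<in> rkhs k"
proof -
  obtain F c where "finite F" and f: "f = (\<lambda>z. if z \<in> F then c z else 0)"
    using assms unfolding dspan_iff by blast
  have "(\<lambda>z. if z \<in> F then c z else 0) \<in> rkhs k"
    using \<open>finite F\<close>
  proof (induction F rule: finite_induct)
    case empty
    show ?case using kspan_subset_rkhs[OF kcomb_in_kspan[of "{}" c]] by (simp add: kcomb_def)
  next
    case (insert x F)
    have "(\<lambda>z. if z \<in> insert x F then c z else 0) = (\<lambda>z. c x * delta x z + 1 * (if z \<in> F then c z else 0))"
      using insert(2) by (auto simp: delta_def)
    then show ?case using rkhs_lincomb[OF delta_in_rkhs[of x] insert.IH, of "c x" 1] by simp
  qed
  with f show ?thesis by simp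
qed

text \<open>Defining it through the inner product with \<open>\<delta>\<^sub>y\<close> makes it independent of
  the representation of \<open>u\<close> as a combination of the \<open>k\<^sub>x\<close>; by \<open>kcoeffs_kcomb\<close> it returns the
  coefficients.\<close>

definition kcoeffs :: "('v \<Rightarrow> complex) \<Rightarrow> 'v \<Rightarrow> complex" where
  "kcoeffs u = (\<lambda>y. rkhs_ip k (delta y) u)"

lemma kcoeffs_kcomb:
  assumes "finite F"
  shows "kcoeffs (kcomb c F) = (\<lambda>y. if y \<in> F then c y else 0)"
proof
  fix y
  have "kcoeffs (kcomb c F) y = cnj (rkhs_ip k (kcomb c F) (delta y))"
    unfolding kcoeffs_def by (rule rkhs_ip_kspan_commute[OF kcomb_in_kspan[OF assms] delta_in_rkhs])
  also have "\<dots> = cnj (\<Sum>x\<in>F. cnj (c x) * delta y x)"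
    by (simp only: rkhs_ip_kcomb[OF assms delta_in_rkhs])
  finally have "kcoeffs (kcomb c F) y = cnj (\<Sum>x\<in>F. cnj (c x) * delta y x)" .
  then show "kcoeffs (kcomb c F) y = (if y \<in> F then c y else 0)"
    by (simp add: sum_mult_delta(1)[OF assms])
qed

lemma kcoeffs_kfun: "kcoeffs (kfun k x) = delta x"
  by (auto simp: kfun_eq_kcomb kcoeffs_kcomb delta_def)

lemma kcoeffs_lin_op: "lin_op (kspan k) l2 kcoeffs"
  unfolding lin_op_def
proof safe
  fix u assume "u \<in> kspan k"
  then obtain F c where "finite F" "u = kcomb c F" unfolding kspan_iff by blast
  then show "kcoeffs u \<in> l2" by (auto simp: kcoeffs_kcomb intro: finite_support_in_l2)
next
  fix u v a b assume "u \<in> kspan k" "v \<in> kspan k"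
  then obtain F c G d where "finite F" "u = kcomb c F" "finite G" "v = kcomb d G"
    unfolding kspan_iff by blast
  then show "kcoeffs (\<lambda>z. a * u z + b * v z) = (\<lambda>z. a * kcoeffs u z + b * kcoeffs v z)"
    by (auto simp: kcomb_lincomb kcoeffs_kcomb)
qed

lemma kcoeffs_diff:
  assumes "u \<in> kspan k" "v \<in> kspan k"
  shows "kcoeffs (u - v) = kcoeffs u - kcoeffs v"
proof -
  have "kcoeffs (\<lambda>z. 1 * u z + (- 1) * v z) = (\<lambda>z. 1 * kcoeffs u z + (- 1) * kcoeffs v z)"
    using kcoeffs_lin_op assms unfolding lin_op_def by blast
  then show ?thesis by (simp add: fun_diff_def)
qed

lemma norm_kcoeffs_le: "u \<in> kspan k \<Longrightarrow> cmod (kcoeffs u y) \<le> pnorm u * hnorm (delta y)"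
  using norm_rkhs_ip_le[OF _ delta_in_rkhs, of u y]
  unfolding kcoeffs_def rkhs_ip_kspan_commute[OF _ delta_in_rkhs] by simp

lemma l2_ip_kcoeffs:
  assumes "u \<in> kspan k" "v \<in> rkhs k"
  shows "l2_ip (kcoeffs u) v = rkhs_ip k u v" "l2_ip v (kcoeffs u) = rkhs_ip k v u"
proof -
  obtain F c where F: "finite F" and u: "u = kcomb c F" using assms(1) unfolding kspan_iff by blast
  show "l2_ip (kcoeffs u) v = rkhs_ip k u v"
    unfolding u kcoeffs_kcomb[OF F] rkhs_ip_kcomb[OF F assms(2)]
    by (subst l2_ip_finite_support[OF F]) auto
  show "l2_ip v (kcoeffs u) = rkhs_ip k v u"
    unfolding u rkhs_ip_kspan_commute[OF kcomb_in_kspan[OF F] assms(2)] kcoeffs_kcomb[OF F]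
      rkhs_ip_kcomb[OF F assms(2)]
    by (subst l2_ip_finite_support[OF F]) (auto simp: mult.commute)
qed

lemma kcoeffs_closable: "closable (rkhs k) (rkhs_ip k) l2 l2_ip (kspan k) kcoeffs"
proof (rule closableI_pointwise)
  fix y
  have "cmod (kcoeffs u y - w y) \<le> 1 * ipnorm l2_ip (kcoeffs u - w)" if "u \<in> kspan k" "w \<in> l2" for u w
    using norm_le_l2_norm[OF l2_diff[OF _ that(2)], of "kcoeffs u" y] kcoeffs_lin_op that(1)
    by (simp add: lin_op_def)
  then show "\<exists>C. \<forall>u\<in>kspan k. \<forall>w\<in>l2. cmod (kcoeffs u y - w y) \<le> C * ipnorm l2_ip (kcoeffs u - w)"
    by blast
  have "cmod (kcoeffs u y - kcoeffs v y) \<le> hnorm (delta y) * (hnorm (u - a) + hnorm (v - a))"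
    if "u \<in> kspan k" "v \<in> kspan k" "a \<in> rkhs k" for u v a
  proof -
    have "pnorm (u - v) = hnorm ((u - a) - (v - a))"
      using rkhs_norm_kspan[OF kspan_diff[OF that(1,2)]] by (simp add: fun_diff_def)
    also have "\<dots> \<le> hnorm (u - a) + hnorm (v - a)"
      using that by (intro rkhs_norm_diff_le rkhs_diff) (simp_all add: kspan_subset_rkhs)
    finally have "pnorm (u - v) * hnorm (delta y) \<le> (hnorm (u - a) + hnorm (v - a)) * hnorm (delta y)"
      by (rule mult_right_mono[OF _ rkhs_norm_nonneg[OF delta_in_rkhs]])
    moreover have "cmod (kcoeffs u y - kcoeffs v y) \<le> pnorm (u - v) * hnorm (delta y)"
      using norm_kcoeffs_le[OF kspan_diff[OF that(1,2)]] kcoeffs_diff[OF that(1,2)] by simp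
    ultimately have "cmod (kcoeffs u y - kcoeffs v y) \<le> (hnorm (u - a) + hnorm (v - a)) * hnorm (delta y)"
      by (rule order_trans[rotated])
    then show ?thesis by (simp only: mult.commute)
  qed
  then show "\<exists>C. \<forall>u\<in>kspan k. \<forall>v\<in>kspan k. \<forall>a\<in>rkhs k.
      cmod (kcoeffs u y - kcoeffs v y) \<le> C * (hnorm (u - a) + hnorm (v - a))"
    by blast
qed

lemma dspan_inclusion_closable: "closable l2 l2_ip (rkhs k) (rkhs_ip k) dspan (\<lambda>v. v)"
proof (rule closableI_pointwise)
  fix y
  have "cmod (u y - w y) \<le> pnorm (kfun k y) * hnorm (u - w)" if "u \<in> dspan" "w \<in> rkhs k" for u w
    using norm_le_rkhs_norm[OF rkhs_diff[OF dspan_subset_rkhs[OF that(1)] that(2)], of y] by simp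
  then show "\<exists>C. \<forall>u\<in>dspan. \<forall>w\<in>rkhs k. cmod (u y - w y) \<le> C * hnorm (u - w)"
    by blast
  have "cmod (u y - v y) \<le> 1 * (ipnorm l2_ip (u - a) + ipnorm l2_ip (v - a))"
    if "u \<in> dspan" "v \<in> dspan" "a \<in> l2" for u v a
  proof -
    have "cmod (u y - v y) \<le> cmod (u y - a y) + cmod (v y - a y)"
      using norm_triangle_ineq4[of "u y - a y" "v y - a y"] by simp
    also have "\<dots> \<le> ipnorm l2_ip (u - a) + ipnorm l2_ip (v - a)"
      using norm_le_l2_norm[OF l2_diff[OF dspan_subset_l2[OF that(1)] that(3)], of y]
        norm_le_l2_norm[OF l2_diff[OF dspan_subset_l2[OF that(2)] that(3)], of y]
      by (intro add_mono) simp_all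
    finally show ?thesis by simp
  qed
  then show "\<exists>C. \<forall>u\<in>dspan. \<forall>v\<in>dspan. \<forall>a\<in>l2.
      cmod (u y - v y) \<le> C * (ipnorm l2_ip (u - a) + ipnorm l2_ip (v - a))"
    by blast
qed

end

theorem corollary2p7:
  fixes k :: "'v \<Rightarrow> 'v \<Rightarrow> complex"
  assumes "countable (UNIV :: 'v set)" and "infinite (UNIV :: 'v set)"
    and "pos_def_kernel k"
    and "\<forall>x. delta x \<in> rkhs k"
  shows "\<exists>T S.
     lin_op (kspan k) l2 T \<and> closable (rkhs k) (rkhs_ip k) l2 l2_ip (kspan k) T \<and>
     lin_op dspan (rkhs k) S \<and> closable l2 l2_ip (rkhs k) (rkhs_ip k) dspan S \<and>
     graph (kspan k) T \<subseteq> adjoint_graph l2 l2_ip (rkhs k) (rkhs_ip k) dspan S \<and>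
     graph dspan S \<subseteq> adjoint_graph (rkhs k) (rkhs_ip k) l2 l2_ip (kspan k) T \<and>
     (\<forall>x. T (kfun k x) = delta x) \<and> (\<forall>x. S (delta x) = delta x)"
proof -
  interpret pd_kernel_deltas k
    using assms(3,4) by unfold_locales auto
  have "lin_op dspan (rkhs k) (\<lambda>v. v)"
    by (simp add: lin_op_def dspan_subset_rkhs)
  moreover have "graph (kspan k) kcoeffs \<subseteq> adjoint_graph l2 l2_ip (rkhs k) (rkhs_ip k) dspan (\<lambda>v. v)"
    using kcoeffs_lin_op by (auto simp: graph_def adjoint_graph_def lin_op_def kspan_subset_rkhs
        dspan_subset_rkhs l2_ip_kcoeffs(2))
  moreover have "graph dspan (\<lambda>v. v) \<subseteq> adjoint_graph (rkhs k) (rkhs_ip k) l2 l2_ip (kspan k) kcoeffs"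
    by (auto simp: graph_def adjoint_graph_def dspan_subset_l2 dspan_subset_rkhs l2_ip_kcoeffs(1))
  ultimately show ?thesis
    using kcoeffs_lin_op kcoeffs_closable dspan_inclusion_closable kcoeffs_kfun by blast
qed

end
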